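(* Let $d\ge 1$, $D>0$, $\sigma\ge 0$, $\alpha\in[0,1)$, and let $T$ be a positive integer. Let $w^*\in\mathbb{R}^d$ with $\|w^*\|\le D$, and let $(x,\epsilon,b)$ be mutually independent random variables with $x\in\mathbb{R}^d$, $\|x\|\le 1$ a.s., $\mathbb{E}[x]=0$, $\epsilon\in\mathbb{R}$, $|\epsilon|\le\sigma$ a.s., $\mathbb{E}[\epsilon]=0$, $b\in\mathbb{R}$, $\mathbb{P}(b\neq 0)=\alpha$, and set $y=\langle w^*,x\rangle+\epsilon+b$. Let $R=6D+\sigma$ and let $\bar w$ be the output of the following algorithm: set $w_1=0$ and $\eta=\frac{D}{R\sqrt T}$; for $t=1,\dots,T$, draw a fresh independent sample $(x_t,y_t)$ distributed as $(x,y)$, set $g_t=\phi_R(\langle w_t,x_t\rangle-y_t)\,x_t$ and $w_{t+1}=\Pi_{\mathcal W}(w_t-\eta g_t)$; output $\bar w=\frac1T\sum_{t=1}^T w_t$. Then $$\mathbb{E}[F(\bar w)]-F(w^* )\le \frac{RD}{(1-\alpha)\sqrt T}.$$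
   Context: $\mathcal W=\{w\in\mathbb{R}^d:\|w\|\le D\}$ and $\Pi_{\mathcal W}(u)=\arg\min_{w\in\mathcal W}\|w-u\|$ is the Euclidean projection. $\phi_R(s)=\min\{R,\max\{s,-R\}\}$ (the derivative of the Huber loss $h_R(s)=\frac12 s^2$ if $|s|\le R$, $h_R(s)=R(|s|-\frac12R)$ otherwise). $F(w)=\mathbb{E}_{x,\epsilon}\big[\tfrac12(\langle w,x\rangle-\langle w^*,x\rangle-\epsilon)^2\big]$ is the expected squared loss on uncorrupted data (i.e. with $b=0$). The expectation $\mathbb{E}[F(\bar w)]$ is over the samples drawn by the algorithm. *)

theory Defs
  imports "HOL-Probability.Probability"
begin

text \<open>Clipping function phi_R (derivative of the Huber loss).\<close>
definition phi :: "real \<Rightarrow> real \<Rightarrow> real" where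
  "phi R s = min R (max s (-R))"

definition Wset :: "real \<Rightarrow> 'a::euclidean_space set" where
  "Wset D = {w. norm w \<le> D}"

definition proj :: "real \<Rightarrow> 'a::euclidean_space \<Rightarrow> 'a" where
  "proj D u = closest_point (Wset D) u"

text \<open>Iterates of the algorithm. A sample is a triple (x, (eps, b)); the label is
  y = <w*,x> + eps + b. Index 0 corresponds to w_1 of the paper; sample S t is the
  (t+1)-st sample.\<close>
primrec sgd_iter :: "real \<Rightarrow> real \<Rightarrow> real \<Rightarrow> 'a::euclidean_space \<Rightarrow>
    (nat \<Rightarrow> 'a \<times> real \<times> real) \<Rightarrow> nat \<Rightarrow> 'a" where
  "sgd_iter D R eta wstar S 0 = 0"
| "sgd_iter D R eta wstar S (Suc t) =
     (let w = sgd_iter D R eta wstar S t;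
          x = fst (S t);
          y = inner wstar x + fst (snd (S t)) + snd (snd (S t));
          g = phi R (inner w x - y) *\<^sub>R x
      in proj D (w - eta *\<^sub>R g))"

definition sgd_avg :: "real \<Rightarrow> real \<Rightarrow> nat \<Rightarrow> 'a::euclidean_space \<Rightarrow>
    (nat \<Rightarrow> 'a \<times> real \<times> real) \<Rightarrow> 'a" where
  "sgd_avg D R T wstar S =
     (1 / real T) *\<^sub>R (\<Sum>t<T. sgd_iter D R (D / (R * sqrt (real T))) wstar S t)"

text \<open>Expected squared loss on uncorrupted data.\<close>
definition sq_risk :: "'a::euclidean_space measure \<Rightarrow> real measure \<Rightarrow> 'a \<Rightarrow> 'a \<Rightarrow> real" where
  "sq_risk Mx Me wstar w =
     (\<integral>z. (1/2) * (inner w (fst z) - inner wstar (fst z) - snd z)\<^sup>2 \<partial>(Mx \<Otimes>\<^sub>M Me))"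

end

theory Submission
  imports Defs
begin

(* Projected SGD gives the deterministic regret bound
     2 eta sum_t <g_t, w_t - wstar> <= D^2 + T eta^2 R^2,
   since every stochastic gradient g_t has norm at most R. As w_t depends only on earlier
   samples, E <g_t, w_t - wstar> = E G(w_t) with G(v) = E_z <g(v, z), v - wstar>. Writing
   u = <v - wstar, x>, monotonicity of the clipping gives phi(u - e - b) u >= phi(-e - b) u,
   with the extra term u^2 when b = 0, because then the residual is at most 2D + sigma <= R
   and is not clipped. The first term has mean zero since E x = 0 and x is independent of
   the noise, hence G(v) >= (1 - alpha) E u^2 = 2 (1 - alpha) (F(v) - F(wstar)). Convexity of F
   passes the bound to the average of the iterates, and eta = D / (R sqrt T) balances the
   regret bound at R D sqrt T. *)

section \<open>Independent components of product measures\<close>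

lemma pair_prob_spaceI: "prob_space A \<Longrightarrow> prob_space B \<Longrightarrow> pair_prob_space A B"
  by (simp add: pair_prob_space_def pair_sigma_finite_def prob_space_imp_sigma_finite)

lemma AE_pair_fst:
  assumes "prob_space B" and "AE x in A. Q x"
  shows "AE z in A \<Otimes>\<^sub>M B. Q (fst z)"
proof (rule AE_distrD[of fst _ A])
  show "AE x in distr (A \<Otimes>\<^sub>M B) A fst. Q x"
    unfolding prob_space.distr_pair_fst[OF assms(1)] by (fact assms(2))
qed simp

lemma distr_pair_snd:
  assumes "prob_space A" and "prob_space B"
  shows "distr (A \<Otimes>\<^sub>M B) B snd = B"
proof -
  interpret pair_prob_space A B
    using assms by (rule pair_prob_spaceI)
  have "distr (A \<Otimes>\<^sub>M B) B snd = distr (B \<Otimes>\<^sub>M A) B (snd \<circ> (\<lambda>(x, y). (y, x)))"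
    by (subst distr_pair_swap) (simp add: distr_distr)
  also have "\<dots> = B"
    using prob_space.distr_pair_fst[OF assms(1)] by (simp add: comp_def split_beta)
  finally show ?thesis .
qed

lemma AE_pair_snd:
  assumes "prob_space A" and "prob_space B" and "AE y in B. Q y"
  shows "AE z in A \<Otimes>\<^sub>M B. Q (snd z)"
proof (rule AE_distrD[of snd _ B])
  show "AE y in distr (A \<Otimes>\<^sub>M B) B snd. Q y"
    unfolding distr_pair_snd[OF assms(1,2)] by (fact assms(3))
qed simp

lemma
  fixes f :: "'a \<Rightarrow> real" and g :: "'b \<Rightarrow> real"
  assumes A: "prob_space A" and B: "prob_space B"
    and [measurable]: "f \<in> borel_measurable A" "g \<in> borel_measurable B"
    and f_bound: "AE x in A. \<bar>f x\<bar> \<le> K" and g_bound: "AE y in B. \<bar>g y\<bar> \<le> L"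
  shows integrable_pair_mult: "integrable (A \<Otimes>\<^sub>M B) (\<lambda>z. f (fst z) * g (snd z))"
    and integral_pair_mult: "(\<integral>z. f (fst z) * g (snd z) \<partial>(A \<Otimes>\<^sub>M B)) = integral\<^sup>L A f * integral\<^sup>L B g"
proof -
  interpret pair_prob_space A B
    using A B by (rule pair_prob_spaceI)
  have "AE z in A \<Otimes>\<^sub>M B. \<bar>f (fst z)\<bar> \<le> K" "AE z in A \<Otimes>\<^sub>M B. \<bar>g (snd z)\<bar> \<le> L"
    using AE_pair_fst[OF B f_bound] AE_pair_snd[OF A B g_bound] .
  then have "AE z in A \<Otimes>\<^sub>M B. norm (f (fst z) * g (snd z)) \<le> K * L"
    by eventually_elim (auto simp: abs_mult intro!: mult_mono)
  then show int: "integrable (A \<Otimes>\<^sub>M B) (\<lambda>z. f (fst z) * g (snd z))"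
    by (intro P.integrable_const_bound) auto
  have "(\<integral>z. f (fst z) * g (snd z) \<partial>(A \<Otimes>\<^sub>M B)) = (\<integral>x. (\<integral>y. f x * g y \<partial>B) \<partial>A)"
    using integral_fst'[OF int] by simp
  then show "(\<integral>z. f (fst z) * g (snd z) \<partial>(A \<Otimes>\<^sub>M B)) = integral\<^sup>L A f * integral\<^sup>L B g"
    by simp
qed

lemma (in product_prob_space) integral_PiM_fresh_component:
  fixes g :: "('i \<Rightarrow> 'a) \<Rightarrow> 'a \<Rightarrow> real"
  assumes "finite I" and "i \<in> I"
    and fresh: "\<And>S y. g (S(i := y)) = g S"
    and "integrable (Pi\<^sub>M I M) (\<lambda>S. g S (S i))"
    and "integrable (Pi\<^sub>M I M) (\<lambda>S. \<integral>z. g S z \<partial>M i)"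
  shows "(\<integral>S. g S (S i) \<partial>Pi\<^sub>M I M) = (\<integral>S. (\<integral>z. g S z \<partial>M i) \<partial>Pi\<^sub>M I M)"
proof -
  define J where "J = I - {i}"
  have I: "I = insert i J" "finite J" "i \<notin> J"
    using assms(1,2) by (auto simp: J_def)
  have "(\<integral>S. g S (S i) \<partial>Pi\<^sub>M I M) = (\<integral>S. (\<integral>z. g S z \<partial>M i) \<partial>Pi\<^sub>M J M)"
    using product_integral_insert[OF I(2,3), of "\<lambda>S. g S (S i)"] assms(4) by (simp add: I(1) fresh)
  also have "\<dots> = (\<integral>S. (\<integral>z. g S z \<partial>M i) \<partial>Pi\<^sub>M I M)"
    using product_integral_insert[OF I(2,3), of "\<lambda>S. \<integral>z. g S z \<partial>M i"] assms(5)
    by (simp add: I(1) fresh M.prob_space)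
  finally show ?thesis .
qed

section \<open>Projection and clipping\<close>

lemma Wset_eq_cball: "Wset D = cball 0 D"
  by (auto simp: Wset_def)

lemma norm_proj_le: "0 \<le> D \<Longrightarrow> norm (proj D u) \<le> D"
  using closest_point_in_set[of "cball 0 D" u] by (simp add: proj_def Wset_eq_cball)

lemma norm_proj_diff_le: "norm v \<le> D \<Longrightarrow> norm (proj D u - v) \<le> norm (u - v)"
  using closest_point_lipschitz[of "cball 0 D" u v] closest_point_self[of v "cball 0 D"]
    norm_ge_zero[of v]
  unfolding proj_def Wset_eq_cball by (auto simp: dist_norm)

lemma borel_measurable_proj: "0 \<le> D \<Longrightarrow> proj D \<in> borel_measurable borel"
  unfolding proj_def Wset_eq_cball
  by (intro borel_measurable_continuous_onI continuous_on_closest_point) auto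

lemma proj_step_dist_sq_le:
  assumes "norm u \<le> D"
  shows "(norm (proj D (v - eta *\<^sub>R g) - u))\<^sup>2
           \<le> (norm (v - u))\<^sup>2 - 2 * eta * inner g (v - u) + eta\<^sup>2 * (norm g)\<^sup>2"
proof -
  have shift: "v - eta *\<^sub>R g - u = (v - u) - eta *\<^sub>R g"
    by (simp add: algebra_simps)
  have "norm (proj D (v - eta *\<^sub>R g) - u) \<le> norm ((v - u) - eta *\<^sub>R g)"
    using norm_proj_diff_le[OF assms, of "v - eta *\<^sub>R g"] unfolding shift .
  then have "(norm (proj D (v - eta *\<^sub>R g) - u))\<^sup>2 \<le> (norm ((v - u) - eta *\<^sub>R g))\<^sup>2"
    by (simp add: power_mono)
  also have "\<dots> = (norm (v - u))\<^sup>2 - 2 * eta * inner g (v - u) + eta\<^sup>2 * (norm g)\<^sup>2"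
    unfolding power2_norm_eq_inner
    by (simp add: inner_diff_left inner_diff_right inner_commute power2_eq_square algebra_simps)
  finally show ?thesis .
qed

lemma phi_mono: "a \<le> b \<Longrightarrow> phi R a \<le> phi R b"
  by (auto simp: phi_def)

lemma phi_eq_self: "\<bar>a\<bar> \<le> R \<Longrightarrow> phi R a = a"
  by (auto simp: phi_def)

lemma abs_phi_le: "0 \<le> R \<Longrightarrow> \<bar>phi R a\<bar> \<le> R"
  by (auto simp: phi_def)

text \<open>On a clean sample (\<open>b = 0\<close>) with small residual the clipping is inactive, which
  yields the extra term \<open>u\<^sup>2\<close>; this is where the factor \<open>1 - \<alpha>\<close> comes from.\<close>

lemma phi_mult_ge:
  assumes "b = 0 \<Longrightarrow> \<bar>u\<bar> + \<bar>e\<bar> \<le> R"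
  shows "u * phi R (- e - b) + (if b = 0 then u\<^sup>2 else 0) \<le> phi R (u - e - b) * u"
proof (cases "b = 0")
  case True
  then show ?thesis
    using assms by (simp add: phi_eq_self power2_eq_square algebra_simps)
next
  case False
  have "0 \<le> (phi R (u - e - b) - phi R (- e - b)) * u"
    unfolding zero_le_mult_iff
    using phi_mono[of "- e - b" "u - e - b" R] phi_mono[of "u - e - b" "- e - b" R] by linarith
  then show ?thesis
    using False by (simp add: algebra_simps)
qed

section \<open>Projected SGD with clipped gradients\<close>

definition huber_grad :: "real \<Rightarrow> 'a::euclidean_space \<Rightarrow> 'a \<Rightarrow> 'a \<times> real \<times> real \<Rightarrow> 'a" where
  "huber_grad R wstar w z =
     phi R (inner w (fst z) - (inner wstar (fst z) + fst (snd z) + snd (snd z))) *\<^sub>R fst z"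

lemma norm_huber_grad_le: "0 \<le> R \<Longrightarrow> norm (huber_grad R wstar w z) \<le> R * norm (fst z)"
  by (simp add: huber_grad_def mult_right_mono abs_phi_le)

lemma sgd_iter_Suc_proj:
  "sgd_iter D R eta wstar S (Suc t)
     = proj D (sgd_iter D R eta wstar S t
               - eta *\<^sub>R huber_grad R wstar (sgd_iter D R eta wstar S t) (S t))"
  by (simp add: huber_grad_def Let_def)

declare sgd_iter.simps(2) [simp del]

lemma norm_sgd_iter_le: "0 \<le> D \<Longrightarrow> norm (sgd_iter D R eta wstar S t) \<le> D"
  by (cases t) (simp_all add: sgd_iter_Suc_proj norm_proj_le)

lemma norm_sgd_iter_diff_le:
  assumes "norm wstar \<le> D"
  shows "norm (sgd_iter D R eta wstar S t - wstar) \<le> 2 * D"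
  using norm_triangle_ineq4[of "sgd_iter D R eta wstar S t" wstar] assms
    norm_sgd_iter_le[of D R eta wstar S t] norm_ge_zero[of wstar]
  by linarith

lemma sgd_iter_cong:
  "(\<And>j. j < t \<Longrightarrow> S' j = S j) \<Longrightarrow> sgd_iter D R eta wstar S' t = sgd_iter D R eta wstar S t"
  by (induction t) (simp_all add: sgd_iter_Suc_proj)

lemma sgd_iter_regret_le:
  fixes wstar :: "'a::euclidean_space" and eta :: real
  assumes "norm wstar \<le> D" and "0 \<le> R" and "\<And>t. t < n \<Longrightarrow> norm (fst (S t)) \<le> 1"
  defines "w \<equiv> sgd_iter D R eta wstar S"
  shows "2 * eta * (\<Sum>t<n. inner (huber_grad R wstar (w t) (S t)) (w t - wstar))
           \<le> D\<^sup>2 + real n * eta\<^sup>2 * R\<^sup>2"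
proof -
  define d where "d t = (norm (w t - wstar))\<^sup>2" for t
  have "d (Suc t) - d t \<le> eta\<^sup>2 * R\<^sup>2 - 2 * eta * inner (huber_grad R wstar (w t) (S t)) (w t - wstar)"
    if "t < n" for t
  proof -
    let ?g = "huber_grad R wstar (w t) (S t)"
    have "norm ?g \<le> R"
      using norm_huber_grad_le[OF assms(2)] assms(2) assms(3)[OF that] by (meson mult_left_le order_trans)
    then have "eta\<^sup>2 * (norm ?g)\<^sup>2 \<le> eta\<^sup>2 * R\<^sup>2"
      by (simp add: mult_left_mono power_mono)
    moreover have "d (Suc t) \<le> d t - 2 * eta * inner ?g (w t - wstar) + eta\<^sup>2 * (norm ?g)\<^sup>2"
      unfolding d_def w_def sgd_iter_Suc_proj by (rule proj_step_dist_sq_le[OF assms(1)])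
    ultimately show ?thesis
      by linarith
  qed
  then have "(\<Sum>t<n. d (Suc t) - d t)
               \<le> (\<Sum>t<n. eta\<^sup>2 * R\<^sup>2 - 2 * eta * inner (huber_grad R wstar (w t) (S t)) (w t - wstar))"
    by (rule sum_mono) simp
  also have "\<dots> = real n * eta\<^sup>2 * R\<^sup>2
                 - 2 * eta * (\<Sum>t<n. inner (huber_grad R wstar (w t) (S t)) (w t - wstar))"
    by (simp add: sum_subtractf sum_distrib_left)
  finally have "d n - d 0 \<le> real n * eta\<^sup>2 * R\<^sup>2
                 - 2 * eta * (\<Sum>t<n. inner (huber_grad R wstar (w t) (S t)) (w t - wstar))"
    by (simp only: sum_lessThan_telescope)
  moreover have "d 0 \<le> D\<^sup>2"
    using assms(1) by (simp add: d_def w_def power_mono)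
  moreover have "0 \<le> d n"
    by (simp add: d_def)
  ultimately show ?thesis
    by linarith
qed

section \<open>Excess risk and the clipped gradient\<close>

definition cov_form :: "'a::euclidean_space measure \<Rightarrow> 'a \<Rightarrow> real" where
  "cov_form Mx u = (\<integral>x. (inner u x)\<^sup>2 \<partial>Mx)"

lemma abs_huber_grad_inner_le:
  assumes "0 \<le> R" and "norm (fst z) \<le> 1"
  shows "\<bar>inner (huber_grad R wstar v z) (v - wstar)\<bar> \<le> R * norm (v - wstar)"
proof -
  have "\<bar>inner (huber_grad R wstar v z) (v - wstar)\<bar> \<le> R * norm (fst z) * norm (v - wstar)"
    using Cauchy_Schwarz_ineq2 norm_huber_grad_le[OF assms(1)]
    by (meson mult_right_mono norm_ge_zero order_trans)
  also have "\<dots> \<le> R * norm (v - wstar)"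
    using mult_left_le[OF assms(2), of "R * norm (v - wstar)"] assms(1) by (simp add: ac_simps)
  finally show ?thesis .
qed

lemma huber_grad_inner_ge:
  assumes "norm (fst z) \<le> 1" and "norm (v - wstar) + \<bar>fst (snd z)\<bar> \<le> R"
  shows "inner (v - wstar) (fst z) * phi R (- fst (snd z) - snd (snd z))
           + (inner (v - wstar) (fst z))\<^sup>2 * indicator {0} (snd (snd z))
         \<le> inner (huber_grad R wstar v z) (v - wstar)"
proof -
  obtain x e b where z: "z = (x, e, b)"
    by (cases z) auto
  let ?u = "inner (v - wstar) x"
  have "\<bar>?u\<bar> \<le> norm (v - wstar)"
    using Cauchy_Schwarz_ineq2[of "v - wstar" x] assms(1) by (simp add: z mult_left_le order_trans)
  then have "\<bar>?u\<bar> + \<bar>e\<bar> \<le> R"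
    using assms(2) by (simp add: z)
  then have "?u * phi R (- e - b) + (if b = 0 then ?u\<^sup>2 else 0) \<le> phi R (?u - e - b) * ?u"
    by (rule phi_mult_ge)
  moreover have "inner (huber_grad R wstar v z) (v - wstar) = phi R (?u - e - b) * ?u"
    by (simp add: z huber_grad_def inner_diff_left inner_commute algebra_simps)
  ultimately show ?thesis
    by (cases "b = 0") (simp_all add: z)
qed

locale corrupted_regression =
  fixes Mx :: "'a::euclidean_space measure" and Me Mb :: "real measure" and \<sigma> \<alpha> :: real
  assumes prob_space_Mx: "prob_space Mx" and sets_Mx: "sets Mx = sets borel"
    and norm_x_le: "AE x in Mx. norm x \<le> 1" and mean_x: "(\<integral>x. x \<partial>Mx) = 0"
    and prob_space_Me: "prob_space Me" and sets_Me: "sets Me = sets borel"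
    and abs_e_le: "AE e in Me. \<bar>e\<bar> \<le> \<sigma>" and mean_e: "(\<integral>e. e \<partial>Me) = 0"
    and prob_space_Mb: "prob_space Mb" and sets_Mb: "sets Mb = sets borel"
    and prob_b_ne_0: "measure Mb {b. b \<noteq> 0} = \<alpha>"
begin

sublocale Mx: prob_space Mx
  by (fact prob_space_Mx)

sublocale Me: prob_space Me
  by (fact prob_space_Me)

abbreviation sample :: "('a \<times> real \<times> real) measure" where
  "sample \<equiv> Mx \<Otimes>\<^sub>M (Me \<Otimes>\<^sub>M Mb)"

lemma prob_space_noise: "prob_space (Me \<Otimes>\<^sub>M Mb)"
  using prob_space_Me prob_space_Mb by (rule prob_space_pair)

sublocale sample: prob_space sample
  using prob_space_Mx prob_space_noise by (rule prob_space_pair)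

lemma borel_measurable_id [measurable]:
  "(\<lambda>x. x) \<in> borel_measurable Mx" "(\<lambda>e. e) \<in> borel_measurable Me" "(\<lambda>b. b) \<in> borel_measurable Mb"
  by (simp_all add: measurable_cong_sets[OF sets_Mx refl] measurable_cong_sets[OF sets_Me refl]
      measurable_cong_sets[OF sets_Mb refl])

lemma AE_abs_inner_le: "AE x in Mx. \<bar>inner u x\<bar> \<le> norm u"
  using norm_x_le
proof eventually_elim
  case (elim x)
  then show ?case
    using Cauchy_Schwarz_ineq2[of u x] by (meson mult_left_le norm_ge_zero order_trans)
qed

lemma AE_inner_sq_le: "AE x in Mx. (inner u x)\<^sup>2 \<le> (norm u)\<^sup>2"
  using AE_abs_inner_le[of u] by eventually_elim (metis abs_ge_zero power2_abs power_mono)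

lemma integrable_inner_sq: "integrable Mx (\<lambda>x. (inner u x)\<^sup>2)"
  using AE_inner_sq_le[of u]
  by (intro Mx.integrable_const_bound[where B = "(norm u)\<^sup>2"]) auto

lemma cov_form_nonneg: "0 \<le> cov_form Mx u"
  unfolding cov_form_def by (simp add: integral_nonneg_AE)

lemma cov_form_le: "cov_form Mx u \<le> (norm u)\<^sup>2"
  unfolding cov_form_def using AE_inner_sq_le[of u]
  by (intro Mx.integral_le_const integrable_inner_sq) auto

lemma cov_form_avg_le:
  assumes "0 < T"
  shows "cov_form Mx ((1 / real T) *\<^sub>R (\<Sum>t<T. u t)) \<le> (1 / real T) * (\<Sum>t<T. cov_form Mx (u t))"
proof -
  have "(inner ((1 / real T) *\<^sub>R (\<Sum>t<T. u t)) x)\<^sup>2 \<le> (1 / real T) * (\<Sum>t<T. (inner (u t) x)\<^sup>2)" for x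
  proof -
    have "(inner ((1 / real T) *\<^sub>R (\<Sum>t<T. u t)) x)\<^sup>2 = (\<Sum>t<T. inner (u t) x)\<^sup>2 / (real T)\<^sup>2"
      by (simp add: inner_sum_left power_divide)
    also have "\<dots> \<le> (real T * (\<Sum>t<T. (inner (u t) x)\<^sup>2)) / (real T)\<^sup>2"
      using sum_squared_le_sum_of_squares[of "\<lambda>t. inner (u t) x" "{..<T}"]
      by (intro divide_right_mono) (simp_all add: mult.commute)
    also have "\<dots> = (1 / real T) * (\<Sum>t<T. (inner (u t) x)\<^sup>2)"
      using assms by (simp add: power2_eq_square)
    finally show ?thesis .
  qed
  then have "cov_form Mx ((1 / real T) *\<^sub>R (\<Sum>t<T. u t))
               \<le> (\<integral>x. (1 / real T) * (\<Sum>t<T. (inner (u t) x)\<^sup>2) \<partial>Mx)"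
    unfolding cov_form_def
    by (intro integral_mono integrable_inner_sq Bochner_Integration.integrable_mult_right
        Bochner_Integration.integrable_sum)
  also have "\<dots> = (1 / real T) * (\<Sum>t<T. cov_form Mx (u t))"
    by (simp add: cov_form_def Bochner_Integration.integral_sum[OF integrable_inner_sq])
  finally show ?thesis .
qed

lemma sq_risk_decomp: "sq_risk Mx Me wstar v = cov_form Mx (v - wstar) / 2 + (\<integral>e. e\<^sup>2 / 2 \<partial>Me)"
proof -
  let ?u = "\<lambda>x. inner (v - wstar) x"
  have u_bound: "AE x in Mx. \<bar>?u x\<bar> \<le> norm (v - wstar)"
    by (fact AE_abs_inner_le)
  have u_sq_bound: "AE x in Mx. \<bar>?u x ^ 2 / 2\<bar> \<le> (norm (v - wstar))\<^sup>2 / 2"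
    using AE_inner_sq_le[of "v - wstar"] by eventually_elim simp
  have "AE e in Me. e\<^sup>2 \<le> \<sigma>\<^sup>2"
    using abs_e_le by eventually_elim (metis abs_ge_zero power2_abs power_mono)
  then have e_sq_bound: "AE e in Me. \<bar>e\<^sup>2 / 2\<bar> \<le> \<sigma>\<^sup>2 / 2"
    by eventually_elim simp
  note pair = integrable_pair_mult[OF prob_space_Mx prob_space_Me]
    integral_pair_mult[OF prob_space_Mx prob_space_Me]
  have "sq_risk Mx Me wstar v
      = (\<integral>z. ?u (fst z) ^ 2 / 2 * 1 + 1 * (snd z ^ 2 / 2) - ?u (fst z) * snd z \<partial>(Mx \<Otimes>\<^sub>M Me))"
    unfolding sq_risk_def
    by (intro Bochner_Integration.integral_cong) (simp_all add: inner_diff_left power2_eq_square field_simps)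
  also have "\<dots> = cov_form Mx (v - wstar) / 2 + (\<integral>e. e\<^sup>2 / 2 \<partial>Me)"
    using pair[of ?u "\<lambda>e. e", OF _ _ u_bound abs_e_le]
      pair[of "\<lambda>x. ?u x ^ 2 / 2" "\<lambda>_. 1", OF _ _ u_sq_bound, of 1]
      pair[of "\<lambda>_. 1" "\<lambda>e. e\<^sup>2 / 2" 1, OF _ _ _ e_sq_bound]
    by (simp add: mean_e cov_form_def Mx.prob_space Me.prob_space)
  finally show ?thesis .
qed

lemma excess_sq_risk_eq:
  "sq_risk Mx Me wstar v - sq_risk Mx Me wstar wstar = cov_form Mx (v - wstar) / 2"
  using sq_risk_decomp[of wstar v] sq_risk_decomp[of wstar wstar] by (simp add: cov_form_def)

lemma sigma_nonneg: "0 \<le> \<sigma>"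
proof -
  have "AE e in Me. 0 \<le> \<sigma>"
    using abs_e_le by eventually_elim auto
  then show ?thesis
    by simp
qed

lemma AE_sample_bounds: "AE z in sample. norm (fst z) \<le> 1 \<and> \<bar>fst (snd z)\<bar> \<le> \<sigma>"
  using AE_pair_fst[OF prob_space_noise norm_x_le]
    AE_pair_snd[OF prob_space_Mx prob_space_noise AE_pair_fst[OF prob_space_Mb abs_e_le]]
  by eventually_elim simp

lemma integral_clean_indicator: "(\<integral>n. indicator {0} (snd n) \<partial>(Me \<Otimes>\<^sub>M Mb)) = 1 - \<alpha>"
proof -
  have space_Mb: "space Mb = UNIV"
    using sets_eq_imp_space_eq[OF sets_Mb] by simp
  have "(\<integral>n. indicator {0} (snd n) \<partial>(Me \<Otimes>\<^sub>M Mb)) = measure Mb {0}"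
    using integral_distr[of snd "Me \<Otimes>\<^sub>M Mb" Mb "indicator {0} :: real \<Rightarrow> real"]
    by (simp add: distr_pair_snd[OF prob_space_Me prob_space_Mb] sets_Mb space_Mb)
  also have "\<dots> = measure Mb (space Mb - {b. b \<noteq> 0})"
    by (rule arg_cong[where f = "measure Mb"]) (auto simp: space_Mb)
  also have "\<dots> = 1 - \<alpha>"
    using prob_space.prob_compl[OF prob_space_Mb, of "{b. b \<noteq> 0}"] prob_b_ne_0 sets_Mb by simp
  finally show ?thesis .
qed

lemma integrable_huber_grad_inner:
  assumes "0 \<le> R"
  shows "integrable sample (\<lambda>z. inner (huber_grad R wstar v z) (v - wstar))"
proof (rule sample.integrable_const_bound[where B = "R * norm (v - wstar)"])
  show "AE z in sample. norm (inner (huber_grad R wstar v z) (v - wstar)) \<le> R * norm (v - wstar)"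
    using AE_sample_bounds by eventually_elim (simp add: abs_huber_grad_inner_le assms)
  show "(\<lambda>z. inner (huber_grad R wstar v z) (v - wstar)) \<in> borel_measurable sample"
    unfolding huber_grad_def phi_def by measurable
qed

lemma huber_grad_correlation_ge:
  assumes R: "norm (v - wstar) + \<sigma> \<le> R"
  shows "(1 - \<alpha>) * cov_form Mx (v - wstar) \<le> (\<integral>z. inner (huber_grad R wstar v z) (v - wstar) \<partial>sample)"
proof -
  let ?u = "\<lambda>x. inner (v - wstar) x"
  let ?clip = "\<lambda>n. phi R (- fst n - snd n)"
  let ?clean = "\<lambda>n. indicator {0} (snd n) :: real"
  have "0 \<le> R"
    using R sigma_nonneg norm_ge_zero[of "v - wstar"] by linarith
  have u_bound: "AE x in Mx. \<bar>?u x\<bar> \<le> norm (v - wstar)"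
      "AE x in Mx. \<bar>?u x ^ 2\<bar> \<le> (norm (v - wstar))\<^sup>2"
    using AE_abs_inner_le AE_inner_sq_le by simp_all
  have clip_bound: "AE n in Me \<Otimes>\<^sub>M Mb. \<bar>?clip n\<bar> \<le> R"
    and clean_bound: "AE n in Me \<Otimes>\<^sub>M Mb. \<bar>?clean n\<bar> \<le> 1"
    using abs_phi_le[OF \<open>0 \<le> R\<close>] by simp_all
  have [measurable]: "?clip \<in> borel_measurable (Me \<Otimes>\<^sub>M Mb)"
    unfolding phi_def by measurable
  note pair = integrable_pair_mult[OF prob_space_Mx prob_space_noise]
    integral_pair_mult[OF prob_space_Mx prob_space_noise]
  note clip_term = pair[of ?u ?clip, OF _ _ u_bound(1) clip_bound]
  note clean_term = pair[of "\<lambda>x. ?u x ^ 2" ?clean, OF _ _ u_bound(2) clean_bound]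
  have "integrable Mx (\<lambda>x. x)"
    using norm_x_le by (intro Mx.integrable_const_bound[where B = 1]) auto
  then have "(\<integral>x. ?u x \<partial>Mx) = 0"
    by (simp add: mean_x)
  then have "(\<integral>z. ?u (fst z) * ?clip (snd z) + ?u (fst z) ^ 2 * ?clean (snd z) \<partial>sample)
               = (1 - \<alpha>) * cov_form Mx (v - wstar)"
    using clip_term clean_term by (simp add: integral_clean_indicator cov_form_def)
  moreover have "(\<integral>z. ?u (fst z) * ?clip (snd z) + ?u (fst z) ^ 2 * ?clean (snd z) \<partial>sample)
                   \<le> (\<integral>z. inner (huber_grad R wstar v z) (v - wstar) \<partial>sample)"
  proof (rule integral_mono_AE)
    show "integrable sample (\<lambda>z. ?u (fst z) * ?clip (snd z) + ?u (fst z) ^ 2 * ?clean (snd z))"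
      using clip_term clean_term by simp
    show "integrable sample (\<lambda>z. inner (huber_grad R wstar v z) (v - wstar))"
      using \<open>0 \<le> R\<close> by (rule integrable_huber_grad_inner)
    show "AE z in sample. ?u (fst z) * ?clip (snd z) + ?u (fst z) ^ 2 * ?clean (snd z)
                           \<le> inner (huber_grad R wstar v z) (v - wstar)"
      using AE_sample_bounds
    proof eventually_elim
      case (elim z)
      then show ?case
        using R by (intro huber_grad_inner_ge) auto
    qed
  qed
  ultimately show ?thesis
    by simp
qed

section \<open>Expectations over the run of the algorithm\<close>

abbreviation samples :: "nat \<Rightarrow> (nat \<Rightarrow> 'a \<times> real \<times> real) measure" where
  "samples T \<equiv> Pi\<^sub>M {..<T} (\<lambda>_. sample)"

lemma prob_space_samples: "prob_space (samples T)"
  by (intro prob_space_PiM sample.prob_space_axioms)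

lemma borel_measurable_sgd_iter:
  assumes "0 \<le> D" and "t \<le> T"
  shows "(\<lambda>S. sgd_iter D R eta wstar S t) \<in> borel_measurable (samples T)"
  using assms(2)
proof (induction t)
  case (Suc t)
  then have "t < T"
    by simp
  note [measurable] = Suc.IH[OF less_imp_le[OF this]] borel_measurable_proj[OF assms(1)]
  have [measurable]: "(\<lambda>S. S t) \<in> measurable (samples T) sample"
    using \<open>t < T\<close> by (intro measurable_component_singleton) simp
  show ?case
    unfolding sgd_iter_Suc_proj huber_grad_def phi_def by measurable
qed simp

lemma AE_samples_norm_le: "AE S in samples T. \<forall>t<T. norm (fst (S t)) \<le> 1"
proof -
  interpret product_prob_space "\<lambda>_. sample" "{..<T}"
    by unfold_locales
  have "AE S in samples T. norm (fst (S t)) \<le> 1" if "t < T" for t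
    using AE_component[of t "\<lambda>z. norm (fst z) \<le> 1"] AE_sample_bounds that
    by (auto elim: AE_mp)
  then have "AE S in samples T. \<forall>t\<in>{..<T}. norm (fst (S t)) \<le> 1"
    by (intro AE_finite_allI) auto
  then show ?thesis
    by (simp add: Ball_def)
qed

lemma borel_measurable_cov_form:
  assumes [measurable]: "v \<in> borel_measurable N"
  shows "(\<lambda>S. cov_form Mx (v S)) \<in> borel_measurable N"
proof -
  have "(\<lambda>(S, x). (inner (v S) x)\<^sup>2) \<in> borel_measurable (N \<Otimes>\<^sub>M Mx)"
    by measurable
  then show ?thesis
    unfolding cov_form_def by (rule Mx.borel_measurable_lebesgue_integral)
qed

lemma integrable_cov_form:
  assumes "prob_space N" and "v \<in> borel_measurable N" and "\<And>S. norm (v S) \<le> C"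
  shows "integrable N (\<lambda>S. cov_form Mx (v S))"
proof -
  interpret N: prob_space N
    by (fact assms(1))
  have "cov_form Mx (v S) \<le> C\<^sup>2" for S
    using cov_form_le[of "v S"] power_mono[OF assms(3) norm_ge_zero] by (rule order_trans)
  then show ?thesis
    using borel_measurable_cov_form[OF assms(2)]
    by (intro N.integrable_const_bound[where B = "C\<^sup>2"]) (simp_all add: abs_of_nonneg cov_form_nonneg)
qed

lemma borel_measurable_expected_huber_grad_inner:
  assumes [measurable]: "v \<in> borel_measurable N"
  shows "(\<lambda>S. \<integral>z. inner (huber_grad R wstar (v S) z) (v S - wstar) \<partial>sample) \<in> borel_measurable N"
proof -
  have "(\<lambda>(S, z). inner (huber_grad R wstar (v S) z) (v S - wstar)) \<in> borel_measurable (N \<Otimes>\<^sub>M sample)"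
    unfolding huber_grad_def phi_def by measurable
  then show ?thesis
    by (rule sample.borel_measurable_lebesgue_integral)
qed

lemma abs_expected_huber_grad_inner_le:
  assumes "0 \<le> R"
  shows "\<bar>\<integral>z. inner (huber_grad R wstar v z) (v - wstar) \<partial>sample\<bar> \<le> R * norm (v - wstar)"
proof -
  have "\<bar>\<integral>z. inner (huber_grad R wstar v z) (v - wstar) \<partial>sample\<bar>
          \<le> (\<integral>z. \<bar>inner (huber_grad R wstar v z) (v - wstar)\<bar> \<partial>sample)"
    by (rule integral_abs_bound)
  also have "\<dots> \<le> R * norm (v - wstar)"
    using AE_sample_bounds
    by (intro sample.integral_le_const integrable_abs integrable_huber_grad_inner assms)
      (auto elim: AE_mp simp: abs_huber_grad_inner_le assms)
  finally show ?thesis .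
qed

lemma integrable_huber_grad_inner_sgd_iter:
  fixes eta :: real
  assumes "norm wstar \<le> D" and "0 \<le> R" and "t < T"
  defines "w \<equiv> \<lambda>S. sgd_iter D R eta wstar S t"
  shows "integrable (samples T) (\<lambda>S. inner (huber_grad R wstar (w S) (S t)) (w S - wstar))"
    and "integrable (samples T) (\<lambda>S. \<integral>z. inner (huber_grad R wstar (w S) z) (w S - wstar) \<partial>sample)"
proof -
  interpret samples: prob_space "samples T"
    by (rule prob_space_samples)
  have "0 \<le> D"
    using assms(1) norm_ge_zero order_trans by blast
  note w_measurable [measurable] = borel_measurable_sgd_iter[OF \<open>0 \<le> D\<close> less_imp_le[OF assms(3)]]
  have [measurable]: "(\<lambda>S. S t) \<in> measurable (samples T) sample"
    using assms(3) by (intro measurable_component_singleton) simp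
  have w_bound: "R * norm (w S - wstar) \<le> R * (2 * D)" for S
    using norm_sgd_iter_diff_le[OF assms(1)] assms(2) by (simp add: w_def mult_left_mono)
  have "AE S in samples T. norm (inner (huber_grad R wstar (w S) (S t)) (w S - wstar)) \<le> R * (2 * D)"
    using AE_samples_norm_le[of T]
  proof eventually_elim
    case (elim S)
    then have "norm (fst (S t)) \<le> 1"
      using assms(3) by blast
    then show ?case
      using order_trans[OF abs_huber_grad_inner_le[OF assms(2)] w_bound] by simp
  qed
  then show "integrable (samples T) (\<lambda>S. inner (huber_grad R wstar (w S) (S t)) (w S - wstar))"
    by (rule samples.integrable_const_bound) (unfold w_def huber_grad_def phi_def, measurable)
  have "(\<lambda>S. \<integral>z. inner (huber_grad R wstar (w S) z) (w S - wstar) \<partial>sample) \<in> borel_measurable (samples T)"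
    using w_measurable unfolding w_def by (rule borel_measurable_expected_huber_grad_inner)
  then show "integrable (samples T) (\<lambda>S. \<integral>z. inner (huber_grad R wstar (w S) z) (w S - wstar) \<partial>sample)"
    using order_trans[OF abs_expected_huber_grad_inner_le[OF assms(2)] w_bound]
    by (intro samples.integrable_const_bound[where B = "R * (2 * D)"]) auto
qed

text \<open>The iterate \<open>w\<^sub>t\<close> depends only on the samples before \<open>t\<close>, so the \<open>t\<close>-th sample
  is a fresh draw from \<open>sample\<close>.\<close>

lemma expected_huber_grad_inner_sgd_iter:
  fixes eta :: real
  assumes "norm wstar \<le> D" and "0 \<le> R" and "t < T"
  defines "w \<equiv> \<lambda>S. sgd_iter D R eta wstar S t"
  shows "(\<integral>S. inner (huber_grad R wstar (w S) (S t)) (w S - wstar) \<partial>samples T)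
           = (\<integral>S. (\<integral>z. inner (huber_grad R wstar (w S) z) (w S - wstar) \<partial>sample) \<partial>samples T)"
proof -
  interpret samples: product_prob_space "\<lambda>_. sample" "{..<T}"
    by unfold_locales
  have "w (S(t := y)) = w S" for S y
    unfolding w_def by (rule sgd_iter_cong) simp
  then show ?thesis
    using assms(3) integrable_huber_grad_inner_sgd_iter[OF assms(1-3)]
    by (intro samples.integral_PiM_fresh_component
        [where g = "\<lambda>S z. inner (huber_grad R wstar (w S) z) (w S - wstar)"]) (auto simp: w_def)
qed

lemma expected_cov_form_sgd_iter_le:
  fixes eta :: real
  assumes "norm wstar \<le> D" and "2 * D + \<sigma> \<le> R" and "t < T"
  defines "w \<equiv> \<lambda>S. sgd_iter D R eta wstar S t"
  shows "(1 - \<alpha>) * (\<integral>S. cov_form Mx (w S - wstar) \<partial>samples T)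
           \<le> (\<integral>S. inner (huber_grad R wstar (w S) (S t)) (w S - wstar) \<partial>samples T)"
proof -
  have "0 \<le> D"
    using assms(1) norm_ge_zero order_trans by blast
  then have "0 \<le> R"
    using assms(2) sigma_nonneg by linarith
  have "(1 - \<alpha>) * (\<integral>S. cov_form Mx (w S - wstar) \<partial>samples T)
          = (\<integral>S. (1 - \<alpha>) * cov_form Mx (w S - wstar) \<partial>samples T)"
    by simp
  also have "\<dots> \<le> (\<integral>S. (\<integral>z. inner (huber_grad R wstar (w S) z) (w S - wstar) \<partial>sample) \<partial>samples T)"
  proof (rule integral_mono)
    show "integrable (samples T) (\<lambda>S. (1 - \<alpha>) * cov_form Mx (w S - wstar))"
      using borel_measurable_sgd_iter[OF \<open>0 \<le> D\<close> less_imp_le[OF assms(3)]] norm_sgd_iter_diff_le[OF assms(1)]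
      unfolding w_def
      by (intro Bochner_Integration.integrable_mult_right integrable_cov_form prob_space_samples) auto
    show "(1 - \<alpha>) * cov_form Mx (w S - wstar)
            \<le> (\<integral>z. inner (huber_grad R wstar (w S) z) (w S - wstar) \<partial>sample)" for S
      using norm_sgd_iter_diff_le[OF assms(1), of R eta S t] assms(2) unfolding w_def
      by (intro huber_grad_correlation_ge) linarith
    show "integrable (samples T) (\<lambda>S. \<integral>z. inner (huber_grad R wstar (w S) z) (w S - wstar) \<partial>sample)"
      unfolding w_def by (rule integrable_huber_grad_inner_sgd_iter(2)[OF assms(1) \<open>0 \<le> R\<close> assms(3)])
  qed
  also have "\<dots> = (\<integral>S. inner (huber_grad R wstar (w S) (S t)) (w S - wstar) \<partial>samples T)"
    unfolding w_def by (rule expected_huber_grad_inner_sgd_iter[OF assms(1) \<open>0 \<le> R\<close> assms(3), symmetric])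
  finally show ?thesis .
qed

lemma sgd_expected_cov_form_sum_le:
  fixes eta :: real
  assumes "norm wstar \<le> D" and "2 * D + \<sigma> \<le> R" and "0 < eta"
  shows "(1 - \<alpha>) * (\<Sum>t<T. \<integral>S. cov_form Mx (sgd_iter D R eta wstar S t - wstar) \<partial>samples T)
           \<le> (D\<^sup>2 + real T * eta\<^sup>2 * R\<^sup>2) / (2 * eta)"
proof -
  interpret samples: prob_space "samples T"
    by (rule prob_space_samples)
  let ?w = "\<lambda>t S. sgd_iter D R eta wstar S t"
  let ?c = "\<lambda>t S. inner (huber_grad R wstar (?w t S) (S t)) (?w t S - wstar)"
  have "0 \<le> D"
    using assms(1) norm_ge_zero order_trans by blast
  then have "0 \<le> R"
    using assms(2) sigma_nonneg by linarith
  have c_integrable: "integrable (samples T) (?c t)" if "t < T" for t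
    using integrable_huber_grad_inner_sgd_iter(1)[OF assms(1) \<open>0 \<le> R\<close> that] .
  have "(1 - \<alpha>) * (\<Sum>t<T. \<integral>S. cov_form Mx (?w t S - wstar) \<partial>samples T)
          \<le> (\<Sum>t<T. \<integral>S. ?c t S \<partial>samples T)"
    using expected_cov_form_sgd_iter_le[OF assms(1,2)]
    by (auto simp: sum_distrib_left intro!: sum_mono)
  also have "\<dots> = (\<integral>S. (\<Sum>t<T. ?c t S) \<partial>samples T)"
    by (rule Bochner_Integration.integral_sum[symmetric]) (simp add: c_integrable)
  also have "\<dots> \<le> (D\<^sup>2 + real T * eta\<^sup>2 * R\<^sup>2) / (2 * eta)"
  proof (rule samples.integral_le_const)
    show "integrable (samples T) (\<lambda>S. \<Sum>t<T. ?c t S)"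
      by (intro Bochner_Integration.integrable_sum c_integrable) simp
    show "AE S in samples T. (\<Sum>t<T. ?c t S) \<le> (D\<^sup>2 + real T * eta\<^sup>2 * R\<^sup>2) / (2 * eta)"
      using AE_samples_norm_le[of T]
    proof eventually_elim
      case (elim S)
      then have "2 * eta * (\<Sum>t<T. ?c t S) \<le> D\<^sup>2 + real T * eta\<^sup>2 * R\<^sup>2"
        using sgd_iter_regret_le[OF assms(1) \<open>0 \<le> R\<close>] by blast
      then show ?case
        using assms(3) by (simp add: pos_le_divide_eq mult.commute)
    qed
  qed
  finally show ?thesis .
qed

lemma expected_excess_sq_risk_eq:
  assumes "prob_space N" and "v \<in> borel_measurable N" and "\<And>S. norm (v S - wstar) \<le> C"
  shows "(\<integral>S. sq_risk Mx Me wstar (v S) \<partial>N) - sq_risk Mx Me wstar wstar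
           = (\<integral>S. cov_form Mx (v S - wstar) \<partial>N) / 2"
proof -
  interpret N: prob_space N
    by (fact assms(1))
  have "integrable N (\<lambda>S. cov_form Mx (v S - wstar))"
    using assms by (intro integrable_cov_form) auto
  then have "(\<integral>S. sq_risk Mx Me wstar wstar + cov_form Mx (v S - wstar) / 2 \<partial>N)
               = sq_risk Mx Me wstar wstar + (\<integral>S. cov_form Mx (v S - wstar) \<partial>N) / 2"
    by (simp add: N.prob_space)
  moreover have "sq_risk Mx Me wstar (v S) = sq_risk Mx Me wstar wstar + cov_form Mx (v S - wstar) / 2" for S
    using excess_sq_risk_eq[of wstar "v S"] by simp
  ultimately show ?thesis
    by simp
qed

lemma sgd_expected_excess_risk_le:
  fixes R eta :: real
  assumes "0 < T" and "norm wstar \<le> D"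
  defines "w \<equiv> \<lambda>t S. sgd_iter D R eta wstar S t"
  shows "(\<integral>S. sq_risk Mx Me wstar ((1 / real T) *\<^sub>R (\<Sum>t<T. w t S)) \<partial>samples T) - sq_risk Mx Me wstar wstar
           \<le> (\<Sum>t<T. \<integral>S. cov_form Mx (w t S - wstar) \<partial>samples T) / (2 * real T)"
proof -
  let ?avg = "\<lambda>S. (1 / real T) *\<^sub>R (\<Sum>t<T. w t S)"
  have "0 \<le> D"
    using assms(2) norm_ge_zero order_trans by blast
  have w_measurable: "(\<lambda>S. w t S) \<in> borel_measurable (samples T)" if "t < T" for t
    unfolding w_def using \<open>0 \<le> D\<close> that by (intro borel_measurable_sgd_iter) auto
  have w_bound: "norm (w t S - wstar) \<le> 2 * D" for t S
    unfolding w_def by (rule norm_sgd_iter_diff_le[OF assms(2)])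
  have cov_integrable: "integrable (samples T) (\<lambda>S. cov_form Mx (w t S - wstar))" if "t < T" for t
    using w_measurable[OF that] w_bound by (intro integrable_cov_form prob_space_samples) auto
  have avg_diff: "?avg S - wstar = (1 / real T) *\<^sub>R (\<Sum>t<T. w t S - wstar)" for S
    using assms(1) by (simp add: sum_subtractf scaleR_diff_right sum_constant_scaleR)
  have avg_bound: "norm (?avg S - wstar) \<le> 2 * D" for S
  proof -
    have "norm (\<Sum>t<T. w t S - wstar) \<le> (\<Sum>t<T. 2 * D)"
      using w_bound by (intro order_trans[OF norm_sum] sum_mono)
    then show ?thesis
      using assms(1) by (simp add: avg_diff field_simps)
  qed
  have avg_measurable: "?avg \<in> borel_measurable (samples T)"
    using w_measurable by measurable
  then have avg_integrable: "integrable (samples T) (\<lambda>S. cov_form Mx (?avg S - wstar))"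
    using avg_bound by (intro integrable_cov_form prob_space_samples) auto
  have "(\<integral>S. sq_risk Mx Me wstar (?avg S) \<partial>samples T) - sq_risk Mx Me wstar wstar
          = (\<integral>S. cov_form Mx (?avg S - wstar) \<partial>samples T) / 2"
    using avg_measurable avg_bound by (intro expected_excess_sq_risk_eq prob_space_samples)
  also have "(\<integral>S. cov_form Mx (?avg S - wstar) \<partial>samples T)
               \<le> (\<integral>S. (1 / real T) * (\<Sum>t<T. cov_form Mx (w t S - wstar)) \<partial>samples T)"
    using avg_integrable cov_integrable assms(1) unfolding avg_diff
    by (intro integral_mono cov_form_avg_le Bochner_Integration.integrable_mult_right
        Bochner_Integration.integrable_sum) auto
  also have "\<dots> = (\<Sum>t<T. \<integral>S. cov_form Mx (w t S - wstar) \<partial>samples T) / real T"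
    using cov_integrable by (simp add: Bochner_Integration.integral_sum)
  finally show ?thesis
    by (simp add: field_simps)
qed

lemma sgd_avg_expected_excess_risk_le:
  assumes "0 < T" and "0 < D" and "norm wstar \<le> D" and "2 * D + \<sigma> \<le> R" and "\<alpha> < 1"
  shows "(\<integral>S. sq_risk Mx Me wstar (sgd_avg D R T wstar S) \<partial>samples T) - sq_risk Mx Me wstar wstar
           \<le> R * D / ((1 - \<alpha>) * sqrt (real T))"
proof -
  define s where "s = sqrt (real T)"
  define eta where "eta = D / (R * s)"
  define E where "E = (\<Sum>t<T. \<integral>S. cov_form Mx (sgd_iter D R eta wstar S t - wstar) \<partial>samples T)"
  have s: "0 < s" "real T = s\<^sup>2"
    using assms(1) by (simp_all add: s_def)
  have "0 < R"
    using assms(2,4) sigma_nonneg by linarith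
  then have "0 < eta"
    using assms(2) s by (simp add: eta_def)
  have "(1 - \<alpha>) * E \<le> (D\<^sup>2 + real T * eta\<^sup>2 * R\<^sup>2) / (2 * eta)"
    unfolding E_def using assms(3,4) \<open>0 < eta\<close> by (rule sgd_expected_cov_form_sum_le)
  also have "\<dots> = R * D * s"
    using \<open>0 < R\<close> s assms(2) by (simp add: eta_def field_simps power2_eq_square)
  finally have E_le: "E \<le> R * D * s / (1 - \<alpha>)"
    using assms(5) by (simp add: pos_le_divide_eq mult.commute)
  have "(\<integral>S. sq_risk Mx Me wstar (sgd_avg D R T wstar S) \<partial>samples T) - sq_risk Mx Me wstar wstar
          \<le> E / (2 * real T)"
    unfolding sgd_avg_def E_def eta_def s_def using assms(1,3) by (rule sgd_expected_excess_risk_le)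
  also have "\<dots> \<le> R * D * s / (1 - \<alpha>) / (2 * real T)"
    using E_le by (intro divide_right_mono) simp_all
  also have "\<dots> = R * D / ((1 - \<alpha>) * s) / 2"
    using s assms(5) by (simp add: field_simps power2_eq_square)
  also have "\<dots> \<le> R * D / ((1 - \<alpha>) * s)"
    using \<open>0 < R\<close> s(1) assms(2,5) by (simp add: field_simps)
  finally show ?thesis
    by (simp add: s_def)
qed

end

theorem theorem1:
  fixes Mx :: "'a::euclidean_space measure"
    and Me Mb :: "real measure"
    and D \<sigma> \<alpha> :: real and T :: nat and wstar :: 'a
  assumes "D > 0" and "\<sigma> \<ge> 0" and "0 \<le> \<alpha>" and "\<alpha> < 1" and "T > 0"
    and "norm wstar \<le> D"
    and "prob_space Mx" and "sets Mx = sets borel"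
    and "AE x in Mx. norm x \<le> 1" and "(\<integral>x. x \<partial>Mx) = 0"
    and "prob_space Me" and "sets Me = sets borel"
    and "AE e in Me. \<bar>e\<bar> \<le> \<sigma>" and "(\<integral>e. e \<partial>Me) = 0"
    and "prob_space Mb" and "sets Mb = sets borel"
    and "measure Mb {b. b \<noteq> 0} = \<alpha>"
  shows "(\<integral>S. sq_risk Mx Me wstar (sgd_avg D (6 * D + \<sigma>) T wstar S)
            \<partial>(PiM {..<T} (\<lambda>_. Mx \<Otimes>\<^sub>M (Me \<Otimes>\<^sub>M Mb))))
         - sq_risk Mx Me wstar wstar
         \<le> (6 * D + \<sigma>) * D / ((1 - \<alpha>) * sqrt (real T))"
proof -
  interpret corrupted_regression Mx Me Mb \<sigma> \<alpha>
    by (rule corrupted_regression.intro[OF assms(7-17)])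
  \<comment> \<open>\<open>0 \<le> \<sigma>\<close> and \<open>0 \<le> \<alpha>\<close> are implied by the distributional hypotheses.\<close>
  show ?thesis
    using assms(1,4-6) by (intro sgd_avg_expected_excess_risk_le) auto
qed

end
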